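(* Let $\mathcal{T}$ be the scheme on $\mathcal{M}$ given by $$\mathcal{T}(\mathbf{p})_{2i}=M_{15/16}\big(p_{i-1},\,M_{1/3}(p_i,p_{i+1})\big),\qquad \mathcal{T}(\mathbf{p})_{2i+1}=M_{15/16}\big(p_{i+2},\,M_{2/3}(p_i,p_{i+1})\big),\quad i\in\mathbb{Z}.$$ Then $\delta(\mathcal{T}(\mathbf{p}))\le\tfrac56\,\delta(\mathbf{p})$ for all manifold data $\mathbf{p}$, and $\mathcal{T}$ is convergent.
   Context: $\mathcal{M}$ is a geodesically complete connected Riemannian manifold with distance $d$. For $p_0,p_1\in\mathcal{M}$ a minimal geodesic $\gamma:[0,1]\to\mathcal{M}$ from $p_0$ to $p_1$ is fixed and $M_t(p_0,p_1)=\gamma(t)$, $t\in[0,1]$, so all $M_t(p_0,p_1)$ lie on the same geodesic, $d(p_0,M_t(p_0,p_1))=t\,d(p_0,p_1)$, $d(M_t(p_0,p_1),p_1)=(1-t)d(p_0,p_1)$ and $d(M_s(p_0,p_1),M_t(p_0,p_1))=|s-t|d(p_0,p_1)$. Data $\mathbf{p}=(p_i)_{i\in\mathbb{Z}}$ with $\delta(\mathbf{p})=\sup_id(p_i,p_{i+1})<\infty$. This is the geodesic-inductive-mean adaptation of the linear quartic B-spline scheme with mask $\frac1{16}(1,5,10,10,5,1)$. Convergence: for every data $\mathbf{p}$ the curves $\mathrm{PG}_k(\mathcal{T}^k(\mathbf{p}))$ converge uniformly on $\mathbb{R}$, where $\mathrm{PG}_k(\mathbf{q})(t)=M_{2^kt-n}(q_n,q_{n+1})$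 for $t\in[2^{-k}n,2^{-k}(n+1))$. *)

theory Defs
  imports "HOL-Analysis.Analysis"
begin

text \<open>Abstract rendering of the geodesic averages M_t on a Riemannian manifold:
  a function Mg :: real => 'a => 'a => 'a on a metric space such that
  t |-> Mg t p0 p1, t in [0,1], is a (constant speed) minimal geodesic from p0 to p1.\<close>

definition geodesic_means :: "(real \<Rightarrow> 'a::metric_space \<Rightarrow> 'a \<Rightarrow> 'a) \<Rightarrow> bool" where
  "geodesic_means Mg \<longleftrightarrow>
     (\<forall>p0 p1 t. t \<in> {0..1} \<longrightarrow>
        dist p0 (Mg t p0 p1) = t * dist p0 p1 \<and>
        dist (Mg t p0 p1) p1 = (1 - t) * dist p0 p1) \<and>
     (\<forall>p0 p1 s t. s \<in> {0..1} \<longrightarrow> t \<in> {0..1} \<longrightarrow>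
        dist (Mg s p0 p1) (Mg t p0 p1) = \<bar>s - t\<bar> * dist p0 p1)"

definition delta :: "(int \<Rightarrow> 'a::metric_space) \<Rightarrow> ereal" where
  "delta p = (SUP i. ereal (dist (p i) (p (i + 1))))"

definition scheme :: "(real \<Rightarrow> 'a \<Rightarrow> 'a \<Rightarrow> 'a) \<Rightarrow> (int \<Rightarrow> 'a) \<Rightarrow> int \<Rightarrow> 'a" where
  "scheme Mg p j =
     (let i = j div 2 in
      if even j then Mg (15/16) (p (i - 1)) (Mg (1/3) (p i) (p (i + 1)))
      else Mg (15/16) (p (i + 2)) (Mg (2/3) (p i) (p (i + 1))))"

definition PG :: "(real \<Rightarrow> 'a \<Rightarrow> 'a \<Rightarrow> 'a) \<Rightarrow> nat \<Rightarrow> (int \<Rightarrow> 'a) \<Rightarrow> real \<Rightarrow> 'a" where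
  "PG Mg k q t = (let n = \<lfloor>2 ^ k * t\<rfloor> in Mg (2 ^ k * t - of_int n) (q n) (q (n + 1)))"

end

theory Submission
  imports Defs
begin

text \<open>
  Write D for a bound on the gaps d(p_i, p_(i+1)).  Every new point of the
  scheme is a point M_(15/16)(x, a), where a lies on the edge [p_i, p_(i+1)] and x is a
  neighbour of that edge; it is therefore within (D + d(p_i, a))/16 of a.  Chaining
  triangle inequalities through these auxiliary points shows that consecutive new points
  are at distance at most 5/6 D, and that every new point T(p)_j stays within D of its
  parent p_(j div 2).  The first gives the contraction of delta; iterating it, the gaps
  of the k-th refinement are at most (5/6)^k D.  Since both PG_k and PG_(k+1) pass near
  the parent point, successive piecewise geodesic curves are uniformly within
  3 (5/6)^k D of each other, and a general lemma (uniform Cauchy criterion with a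
  geometric rate, in a complete space) yields uniform convergence.
\<close>

lemma geodesic_dist_start:
  assumes "geodesic_means Mg" "t \<in> {0..1}"
  shows "dist p0 (Mg t p0 p1) = t * dist p0 p1"
  using assms unfolding geodesic_means_def by blast

lemma geodesic_dist_end:
  assumes "geodesic_means Mg" "t \<in> {0..1}"
  shows "dist (Mg t p0 p1) p1 = (1 - t) * dist p0 p1"
  using assms unfolding geodesic_means_def by blast

lemma geodesic_dist_between:
  assumes "geodesic_means Mg" "s \<in> {0..1}" "t \<in> {0..1}"
  shows "dist (Mg s p0 p1) (Mg t p0 p1) = \<bar>s - t\<bar> * dist p0 p1"
  using assms unfolding geodesic_means_def by blast

lemma geodesic_dist_start_le:
  assumes gm: "geodesic_means Mg" and s: "s \<in> {0..1}"
  shows "dist p0 (Mg s p0 p1) \<le> dist p0 p1"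
proof -
  have "dist p0 (Mg s p0 p1) = s * dist p0 p1" by (rule geodesic_dist_start[OF gm s])
  also have "\<dots> \<le> dist p0 p1" using s by (simp add: mult_left_le_one_le)
  finally show ?thesis .
qed

lemma geodesic_15_16_near_end:
  assumes gm: "geodesic_means Mg"
  shows "dist (Mg (15/16) x a) a \<le> (dist x y + dist y a) / 16"
  using geodesic_dist_end[OF gm, of "15/16" x a] dist_triangle[of x a y] by simp

definition gap_bounded :: "(int \<Rightarrow> 'a::metric_space) \<Rightarrow> real \<Rightarrow> bool" where
  "gap_bounded p D \<longleftrightarrow> (\<forall>i. dist (p i) (p (i + 1)) \<le> D)"

lemma gap_boundedD: "gap_bounded p D \<Longrightarrow> dist (p i) (p (i + 1)) \<le> D"
  unfolding gap_bounded_def by blast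

lemma gap_bound_nonneg: "gap_bounded p D \<Longrightarrow> 0 \<le> D"
  using gap_boundedD[of p D 0] zero_le_dist order_trans by metis

lemma scheme_even: "scheme Mg p (2*i) = Mg (15/16) (p (i - 1)) (Mg (1/3) (p i) (p (i + 1)))"
  by (simp add: scheme_def)

lemma scheme_odd: "scheme Mg p (2*i + 1) = Mg (15/16) (p (i + 2)) (Mg (2/3) (p i) (p (i + 1)))"
  by (simp add: scheme_def)

lemma scheme_local_bounds:
  fixes p :: "int \<Rightarrow> 'a::metric_space" and i :: int
  assumes gm: "geodesic_means Mg" and gap: "gap_bounded p D"
  defines "a \<equiv> Mg (1/3) (p i) (p (i + 1))" and "b \<equiv> Mg (2/3) (p i) (p (i + 1))"
  shows "dist (p i) a \<le> D/3" "dist (p i) b \<le> 2*D/3" "dist b (p (i + 1)) \<le> D/3"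
    and "dist a b \<le> D/3"
    and "dist (scheme Mg p (2*i)) a \<le> D/12" "dist (scheme Mg p (2*i + 1)) b \<le> D/12"
proof -
  have g0: "dist (p (i - 1)) (p i) \<le> D" "dist (p i) (p (i + 1)) \<le> D"
    and g1: "dist (p (i + 2)) (p (i + 1)) \<le> D"
    using gap_boundedD[OF gap, of "i - 1"] gap_boundedD[OF gap, of i] gap_boundedD[OF gap, of "i + 1"]
    by (simp_all add: dist_commute add.assoc)
  show A: "dist (p i) a \<le> D/3" "dist (p i) b \<le> 2*D/3" "dist b (p (i + 1)) \<le> D/3"
      "dist a b \<le> D/3"
    using g0(2) geodesic_dist_start[OF gm, of "1/3" "p i" "p (i + 1)"]
      geodesic_dist_start[OF gm, of "2/3" "p i" "p (i + 1)"]
      geodesic_dist_end[OF gm, of "2/3" "p i" "p (i + 1)"]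
      geodesic_dist_between[OF gm, of "1/3" "2/3" "p i" "p (i + 1)"]
    by (simp_all add: a_def b_def)
  show "dist (scheme Mg p (2*i)) a \<le> D/12"
    using geodesic_15_16_near_end[OF gm, of "p (i - 1)" a "p i"] g0 A(1)
    by (simp add: scheme_even a_def)
  show "dist (scheme Mg p (2*i + 1)) b \<le> D/12"
    using geodesic_15_16_near_end[OF gm, of "p (i + 2)" b "p (i + 1)"] g1 A(3)
    by (simp add: scheme_odd b_def dist_commute)
qed

text \<open>Contraction of the gaps: the refined data have gaps at most 5/6 of the old bound.
  The worst case is the odd gap, whose path passes through p_(i+1).\<close>
lemma scheme_gap_contracts:
  fixes p :: "int \<Rightarrow> 'a::metric_space"
  assumes gm: "geodesic_means Mg" and gap: "gap_bounded p D"
  shows "gap_bounded (scheme Mg p) (5/6 * D)"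
  unfolding gap_bounded_def
proof
  fix j :: int
  obtain i where "j = 2*i \<or> j = 2*i + 1" by (metis evenE oddE)
  then consider "j = 2*i" | "j = 2*i + 1" by blast
  then show "dist (scheme Mg p j) (scheme Mg p (j + 1)) \<le> 5/6 * D"
  proof cases
    case 1
    note L = scheme_local_bounds[OF gm gap, of i]
    have "dist (scheme Mg p (2*i)) (scheme Mg p (2*i + 1)) \<le> D/12 + D/3 + D/12"
      using L(4-6) dist_triangle[of "scheme Mg p (2*i)" "scheme Mg p (2*i + 1)"
          "Mg (1/3) (p i) (p (i + 1))"]
        dist_triangle[of "Mg (1/3) (p i) (p (i + 1))" "scheme Mg p (2*i + 1)"
          "Mg (2/3) (p i) (p (i + 1))"]
      by (simp add: dist_commute)
    also have "\<dots> \<le> 5/6 * D" using gap_bound_nonneg[OF gap] by linarith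
    finally show ?thesis using 1 by simp
  next
    case 2
    note L = scheme_local_bounds[OF gm gap, of i] and
      R = scheme_local_bounds[OF gm gap, of "i + 1"]
    define b where "b = Mg (2/3) (p i) (p (i + 1))"
    define c where "c = Mg (1/3) (p (i + 1)) (p (i + 2))"
    have "dist (scheme Mg p (2*i + 1)) (scheme Mg p (2*i + 2))
          \<le> dist (scheme Mg p (2*i + 1)) b + dist b (p (i + 1)) + dist (p (i + 1)) c
             + dist c (scheme Mg p (2*i + 2))"
      using dist_triangle[of "scheme Mg p (2*i + 1)" "scheme Mg p (2*i + 2)" b]
        dist_triangle[of b "scheme Mg p (2*i + 2)" "p (i + 1)"]
        dist_triangle[of "p (i + 1)" "scheme Mg p (2*i + 2)" c]
      by linarith
    also have "\<dots> \<le> D/12 + D/3 + D/3 + D/12"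
      using L(3,6) R(1,5) by (simp add: b_def c_def dist_commute algebra_simps)
    finally show ?thesis using 2 by (simp add: algebra_simps)
  qed
qed

lemma scheme_iterate_gap:
  fixes p :: "int \<Rightarrow> 'a::metric_space"
  assumes gm: "geodesic_means Mg" and gap: "gap_bounded p D"
  shows "gap_bounded ((scheme Mg ^^ k) p) ((5/6)^k * D)"
proof (induction k)
  case 0
  then show ?case using gap by simp
next
  case (Suc k)
  show ?case using scheme_gap_contracts[OF gm Suc.IH] by (simp add: mult.assoc)
qed

lemma scheme_near_parent:
  fixes p :: "int \<Rightarrow> 'a::metric_space"
  assumes gm: "geodesic_means Mg" and gap: "gap_bounded p D"
  shows "dist (scheme Mg p j) (p (j div 2)) \<le> D"
proof -
  obtain i where "j = 2*i \<or> j = 2*i + 1" by (metis evenE oddE)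
  moreover note L = scheme_local_bounds[OF gm gap, of i]
  moreover note gap_bound_nonneg[OF gap]
  ultimately show ?thesis
    using dist_triangle[of "scheme Mg p j" "p i" "Mg (1/3) (p i) (p (i + 1))"]
      dist_triangle[of "scheme Mg p j" "p i" "Mg (2/3) (p i) (p (i + 1))"]
    by (auto simp: dist_commute)
qed

text \<open>Index bookkeeping: the segment of PG_(k+1) containing a parameter is a child of
  the segment of PG_k containing it, and the local curve parameter lies in [0,1].\<close>
lemma floor_double_div2: "\<lfloor>2 * x\<rfloor> div 2 = \<lfloor>x::real\<rfloor>"
proof -
  have "2 * \<lfloor>x\<rfloor> \<le> \<lfloor>2 * x\<rfloor>" "\<lfloor>2 * x\<rfloor> < 2 * \<lfloor>x\<rfloor> + 2"
    by linarith+
  then show ?thesis by presburger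
qed

lemma frac_part_in_unit: "x - of_int \<lfloor>x\<rfloor> \<in> {0..(1::real)}"
  by auto linarith

text \<open>At every parameter t, the curve of the refined data and the curve of the original
  data pass within the gap bound of the common parent point, hence are 3D apart.\<close>
lemma PG_refinement_dist:
  fixes q :: "int \<Rightarrow> 'a::metric_space"
  assumes gm: "geodesic_means Mg" and gap: "gap_bounded q D"
  shows "dist (PG Mg (Suc k) (scheme Mg q) t) (PG Mg k q t) \<le> 3 * D"
proof -
  define x where "x = 2^k * t"
  define n where "n = \<lfloor>x\<rfloor>"
  define m where "m = \<lfloor>2 * x\<rfloor>"
  have gap': "dist (scheme Mg q i) (scheme Mg q (i + 1)) \<le> D" for i
    using gap_boundedD[OF scheme_gap_contracts[OF gm gap], of i] gap_bound_nonneg[OF gap]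
    by linarith
  have old: "PG Mg k q t = Mg (x - of_int n) (q n) (q (n + 1))"
    by (simp add: PG_def Let_def x_def n_def)
  have new: "PG Mg (Suc k) (scheme Mg q) t
      = Mg (2 * x - of_int m) (scheme Mg q m) (scheme Mg q (m + 1))"
    by (simp add: PG_def Let_def x_def m_def mult.assoc)
  have "dist (q n) (PG Mg k q t) \<le> D"
    unfolding old n_def
    using geodesic_dist_start_le[OF gm frac_part_in_unit] gap_boundedD[OF gap] order_trans
    by blast
  moreover have "dist (scheme Mg q m) (PG Mg (Suc k) (scheme Mg q) t) \<le> D"
    unfolding new m_def
    using geodesic_dist_start_le[OF gm frac_part_in_unit] gap' order_trans by blast
  moreover have "dist (scheme Mg q m) (q n) \<le> D"
    using scheme_near_parent[OF gm gap, of m] by (simp add: m_def n_def floor_double_div2)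
  ultimately show ?thesis
    using dist_triangle[of "PG Mg (Suc k) (scheme Mg q) t" "PG Mg k q t" "scheme Mg q m"]
      dist_triangle[of "scheme Mg q m" "PG Mg k q t" "q n"]
    by (simp add: dist_commute)
qed

lemma geometric_tail_bound:
  fixes f :: "nat \<Rightarrow> 'b \<Rightarrow> 'a::metric_space" and r :: real
  assumes step: "\<And>k t. dist (f (Suc k) t) (f k t) \<le> C * r^k" and r: "r < 1"
  shows "dist (f (n + d) t) (f n t) \<le> C * (r^n - r^(n + d)) / (1 - r)"
proof (induction d)
  case 0
  then show ?case by simp
next
  case (Suc d)
  have "dist (f (n + Suc d) t) (f n t) \<le> dist (f (Suc (n + d)) t) (f (n + d) t) + dist (f (n + d) t) (f n t)"
    using dist_triangle[of "f (Suc (n + d)) t" "f n t" "f (n + d) t"] by simp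
  also have "\<dots> \<le> C * r^(n + d) + C * (r^n - r^(n + d)) / (1 - r)"
    using step[of "n + d" t] Suc.IH by linarith
  also have "\<dots> = C * (r^n - r^(n + Suc d)) / (1 - r)"
    using r by (simp add: field_simps)
  finally show ?case .
qed

lemma geometric_uniform_limit:
  fixes f :: "nat \<Rightarrow> 'b \<Rightarrow> 'a::complete_space" and r :: real
  assumes step: "\<And>k t. dist (f (Suc k) t) (f k t) \<le> C * r^k"
    and C: "0 \<le> C" and r: "0 \<le> r" "r < 1"
  shows "\<exists>g. uniform_limit UNIV f g sequentially"
proof -
  have tail: "dist (f m t) (f M t) \<le> C * r^M / (1 - r)" if "M \<le> m" for m M t
  proof -
    obtain d where m: "m = M + d" using \<open>M \<le> m\<close> le_Suc_ex by blast
    have "dist (f m t) (f M t) \<le> C * (r^M - r^(M + d)) / (1 - r)"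
      unfolding m by (rule geometric_tail_bound[OF step r(2)])
    also have "\<dots> \<le> C * r^M / (1 - r)"
      using C r by (intro divide_right_mono mult_left_mono) auto
    finally show ?thesis .
  qed
  have "(\<lambda>M. 2 * (C * r^M / (1 - r))) \<longlonglongrightarrow> 2 * (C * 0 / (1 - r))"
    using r by (intro tendsto_intros LIMSEQ_power_zero) auto
  then have lim: "(\<lambda>M. 2 * (C * r^M / (1 - r))) \<longlonglongrightarrow> 0" by simp
  have "uniformly_Cauchy_on UNIV f"
  proof (rule uniformly_Cauchy_onI)
    fix e :: real assume "0 < e"
    obtain M where M: "2 * (C * r^M / (1 - r)) < e"
      using order_tendstoD(2)[OF lim \<open>0 < e\<close>] unfolding eventually_sequentially by blast
    show "\<exists>M. \<forall>x\<in>UNIV. \<forall>m\<ge>M. \<forall>n\<ge>M. dist (f m x) (f n x) < e"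
    proof (intro exI ballI allI impI)
      fix x m n assume "M \<le> m" "M \<le> n"
      then show "dist (f m x) (f n x) < e"
        using tail[of M m x] tail[of M n x] dist_triangle2[of "f m x" "f n x" "f M x"] M
        by linarith
    qed
  qed
  then show ?thesis using Cauchy_uniformly_convergent uniformly_convergent_on_def by blast
qed

lemma delta_finite_bound:
  assumes "delta p < \<infinity>"
  obtains D where "delta p = ereal D" "gap_bounded p D"
proof -
  have gap: "ereal (dist (p i) (p (i + 1))) \<le> delta p" for i
    unfolding delta_def by (rule SUP_upper) simp
  have "0 \<le> delta p" using gap[of 0] order_trans zero_le_dist by (metis ereal_less_eq(5))
  then obtain D where "delta p = ereal D" using assms by (cases "delta p") auto
  then show ?thesis using that gap unfolding gap_bounded_def by auto
qed

lemma delta_le: "gap_bounded p D \<Longrightarrow> delta p \<le> ereal D"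
  unfolding delta_def gap_bounded_def by (intro SUP_least) simp

theorem mainTheorem11:
  fixes Mg :: "real \<Rightarrow> 'a::complete_space \<Rightarrow> 'a \<Rightarrow> 'a"
  assumes "geodesic_means Mg"
  shows "(\<forall>p :: int \<Rightarrow> 'a. delta p < \<infinity> \<longrightarrow> delta (scheme Mg p) \<le> ereal (5/6) * delta p)
       \<and> (\<forall>p :: int \<Rightarrow> 'a. delta p < \<infinity> \<longrightarrow>
            (\<exists>g. uniform_limit UNIV (\<lambda>k. PG Mg k ((scheme Mg ^^ k) p)) g sequentially))"
proof (intro conjI allI impI)
  fix p :: "int \<Rightarrow> 'a" assume "delta p < \<infinity>"
  then obtain D where D: "delta p = ereal D" "gap_bounded p D"
    by (rule delta_finite_bound)
  show "delta (scheme Mg p) \<le> ereal (5/6) * delta p"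
    using delta_le[OF scheme_gap_contracts[OF assms D(2)]] D(1) by simp
  have "dist (PG Mg (Suc k) ((scheme Mg ^^ Suc k) p) t) (PG Mg k ((scheme Mg ^^ k) p) t)
        \<le> 3 * D * (5/6)^k" for k t
    using PG_refinement_dist[OF assms scheme_iterate_gap[OF assms D(2)], of k k t]
    by (simp add: mult_ac)
  then show "\<exists>g. uniform_limit UNIV (\<lambda>k. PG Mg k ((scheme Mg ^^ k) p)) g sequentially"
    by (rule geometric_uniform_limit) (use gap_bound_nonneg[OF D(2)] in auto)
qed

end
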